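(* The intersection graph of the alternating group $A_{11}$ has diameter $3$.
   Context: For a finite group $G$, the intersection graph $\Delta_G$ is the simple graph whose vertices are the non-trivial proper subgroups of $G$, with an edge between two distinct vertices if and only if the corresponding subgroups intersect non-trivially. *)

theory Defs
  imports "HOL-Algebra.Sym_Groups" "HOL-Library.Extended_Nat"
begin

definition is_path :: "'a set \<Rightarrow> ('a \<Rightarrow> 'a \<Rightarrow> bool) \<Rightarrow> 'a list \<Rightarrow> 'a \<Rightarrow> 'a \<Rightarrow> bool" where
  "is_path V E p u v \<longleftrightarrow> p \<noteq> [] \<and> hd p = u \<and> last p = v \<and> set p \<subseteq> V \<and>
     (\<forall>i. Suc i < length p \<longrightarrow> E (p ! i) (p ! Suc i))"

text \<open>Distance (infinity if no path).\<close>
definition graph_dist :: "'a set \<Rightarrow> ('a \<Rightarrow> 'a \<Rightarrow> bool) \<Rightarrow> 'a \<Rightarrow> 'a \<Rightarrow> enat" where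
  "graph_dist V E u v = (INF p \<in> {p. is_path V E p u v}. enat (length p - 1))"

definition graph_diameter :: "'a set \<Rightarrow> ('a \<Rightarrow> 'a \<Rightarrow> bool) \<Rightarrow> enat" where
  "graph_diameter V E = (SUP (u, v) \<in> V \<times> V. graph_dist V E u v)"

definition intersection_graph_vertices :: "('a, 'b) monoid_scheme \<Rightarrow> 'a set set" where
  "intersection_graph_vertices G =
     {H. subgroup H G \<and> H \<noteq> {\<one>\<^bsub>G\<^esub>} \<and> H \<noteq> carrier G}"

definition intersection_graph_adj :: "('a, 'b) monoid_scheme \<Rightarrow> 'a set \<Rightarrow> 'a set \<Rightarrow> bool" where
  "intersection_graph_adj G H K \<longleftrightarrow> H \<noteq> K \<and> H \<inter> K \<noteq> {\<one>\<^bsub>G\<^esub>}"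

end

theory Submission
  imports Defs "HOL-Computational_Algebra.Primes"
begin

text \<open>
  Lower bound: the cyclic subgroups generated by the 11-cycle \<open>c = (1 2 \<dots> 11)\<close> and the
  3-cycle \<open>d = (1 2 3)\<close> have prime order, so a subgroup meeting either of them nontrivially
  contains its generator; since \<open>c\<close> and \<open>d\<close> generate \<open>A\<^sub>1\<^sub>1\<close>, the two vertices are neither
  adjacent nor have a common neighbour.

  Upper bound: every vertex \<open>X\<close> meets a hub. If some non-identity element of \<open>X\<close> fixes a
  point, \<open>X\<close> meets that point stabiliser; otherwise all non-identity elements of \<open>X\<close> are
  fixed-point-free, hence 11-cycles, and \<open>X\<close> meets a conjugate of the Mathieu group \<open>M\<^sub>1\<^sub>1\<close>,
  which contains \<open>c\<close>. Any two hubs meet: two point stabilisers share a 3-cycle, \<open>M\<^sub>1\<^sub>1\<close> is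
  transitive with nontrivial point stabilisers and so meets every point stabiliser, and two
  conjugates of \<open>M\<^sub>1\<^sub>1\<close> meet because \<open>|M\<^sub>1\<^sub>1|\<^sup>2 > |A\<^sub>1\<^sub>1|\<close>.
\<close>

lemma graph_dist_le_length:
  "is_path V E p u v \<Longrightarrow> graph_dist V E u v \<le> enat (length p - 1)"
  unfolding graph_dist_def by (rule INF_lower) auto

lemma is_path_snoc:
  assumes "is_path V E p u v" "w \<in> V" "E v w"
  shows "is_path V E (p @ [w]) u w"
proof -
  have p: "p \<noteq> []" "hd p = u" "last p = v" "set p \<subseteq> V"
    and steps: "\<And>i. Suc i < length p \<Longrightarrow> E (p ! i) (p ! Suc i)"
    using assms(1) unfolding is_path_def by auto
  have "E ((p @ [w]) ! i) ((p @ [w]) ! Suc i)" if i: "Suc i < length (p @ [w])" for i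
  proof (cases "Suc i < length p")
    case True
    then show ?thesis using steps by (simp add: nth_append)
  next
    case False
    with i have "i = length p - 1" "Suc i = length p" by auto
    then show ?thesis using assms(3) p(1,3) by (simp add: nth_append last_conv_nth)
  qed
  then show ?thesis using p assms(2) unfolding is_path_def by auto
qed

lemma graph_dist_le_3I:
  assumes "x0 \<in> V" "x1 \<in> V" "x2 \<in> V" "x3 \<in> V"
    and "x0 = x1 \<or> E x0 x1" "x1 = x2 \<or> E x1 x2" "x2 = x3 \<or> E x2 x3"
  shows "graph_dist V E x0 x3 \<le> 3"
proof -
  have extend: "\<exists>q. is_path V E q x0 w \<and> length q \<le> Suc (length p)"
    if "is_path V E p x0 v" "w \<in> V" "v = w \<or> E v w" for p v w
    using that is_path_snoc[OF that(1,2)] by force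
  have "is_path V E [x0] x0 x0" using assms(1) unfolding is_path_def by simp
  then obtain p1 where p1: "is_path V E p1 x0 x1" "length p1 \<le> 2"
    using extend[OF _ assms(2,5)] by fastforce
  then obtain p2 where p2: "is_path V E p2 x0 x2" "length p2 \<le> 3"
    using extend[OF p1(1) assms(3,6)] by fastforce
  then obtain p3 where p3: "is_path V E p3 x0 x3" "length p3 \<le> 4"
    using extend[OF p2(1) assms(4,7)] by fastforce
  have "graph_dist V E x0 x3 \<le> enat (length p3 - 1)" by (rule graph_dist_le_length[OF p3(1)])
  also have "\<dots> \<le> 3" using p3(2) by (simp add: numeral_eq_enat)
  finally show ?thesis .
qed

lemma graph_dist_ge_3I:
  assumes "u \<noteq> v" "\<not> E u v" "\<And>w. w \<in> V \<Longrightarrow> E u w \<Longrightarrow> E w v \<Longrightarrow> False"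
  shows "3 \<le> graph_dist V E u v"
  unfolding graph_dist_def
proof (rule INF_greatest)
  fix p assume "p \<in> {p. is_path V E p u v}"
  then have p: "is_path V E p u v" by simp
  have "\<not> length p \<le> 3"
  proof
    assume l: "length p \<le> 3"
    have "length p \<noteq> 0" using p unfolding is_path_def by auto
    with l have "length p = 1 \<or> length p = 2 \<or> length p = 3" by linarith
    then show False
    proof (elim disjE)
      assume "length p = 1"
      then obtain x where "p = [x]" by (cases p) auto
      then show False using p assms(1) unfolding is_path_def by auto
    next
      assume "length p = 2"
      then obtain x y where "p = [x, y]" by (cases p; cases "tl p") auto
      then show False using p assms(2) unfolding is_path_def by (auto dest: spec[of _ 0])
    next
      assume "length p = 3"
      then obtain x y z where pp: "p = [x, y, z]" by (cases p; cases "tl p"; cases "tl (tl p)") auto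
      have "E x y" "E y z" using p unfolding is_path_def pp
        by (auto dest: spec[of _ 0] spec[of _ 1])
      moreover have "y \<in> V" using p unfolding is_path_def pp by auto
      ultimately show False using p assms(3) unfolding is_path_def pp by auto
    qed
  qed
  then show "3 \<le> enat (length p - 1)" by (simp add: numeral_eq_enat)
qed

lemma graph_diameter_eqI:
  assumes "\<And>u v. u \<in> V \<Longrightarrow> v \<in> V \<Longrightarrow> graph_dist V E u v \<le> d"
    and "u0 \<in> V" "v0 \<in> V" "d \<le> graph_dist V E u0 v0"
  shows "graph_diameter V E = d"
  unfolding graph_diameter_def
proof (rule antisym)
  show "(SUP (u, v)\<in>V \<times> V. graph_dist V E u v) \<le> d"
    by (rule SUP_least) (use assms(1) in auto)
  have "graph_dist V E u0 v0 \<le> (SUP (u, v)\<in>V \<times> V. graph_dist V E u v)"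
    using SUP_upper[of "(u0, v0)" "V \<times> V" "\<lambda>(u, v). graph_dist V E u v"] assms(2,3) by auto
  then show "d \<le> (SUP (u, v)\<in>V \<times> V. graph_dist V E u v)" using assms(4) by auto
qed

lemma intersection_graph_adj_or_eq:
  "X \<inter> Y \<noteq> {\<one>\<^bsub>G\<^esub>} \<Longrightarrow> X = Y \<or> intersection_graph_adj G X Y"
  unfolding intersection_graph_adj_def by blast

lemma (in group) card_mult_le_order:
  assumes "finite (carrier G)" "subgroup A G" "subgroup B G" "A \<inter> B = {\<one>}"
  shows "card A * card B \<le> order G"
proof -
  have inj: "inj_on (\<lambda>(a, b). a \<otimes> b) (A \<times> B)"
  proof (rule inj_onI, clarify)
    fix a b a' b' assume ab: "a \<in> A" "b \<in> B" "a' \<in> A" "b' \<in> B" and eq: "a \<otimes> b = a' \<otimes> b'"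
    have c: "a \<in> carrier G" "b \<in> carrier G" "a' \<in> carrier G" "b' \<in> carrier G"
      using ab assms(2,3) subgroup.subset by blast+
    have "inv a' \<otimes> a = b' \<otimes> inv b"
      using eq c by (metis inv_solve_left' inv_solve_right m_assoc m_closed inv_closed)
    moreover have "inv a' \<otimes> a \<in> A" "b' \<otimes> inv b \<in> B"
      using ab assms(2,3) by (simp_all add: subgroup.m_closed subgroup.m_inv_closed)
    ultimately have "inv a' \<otimes> a = \<one>" "b' \<otimes> inv b = \<one>" using assms(4) by auto
    then show "a = a' \<and> b = b'" using c by (metis inv_closed inv_inv inv_equality r_inv l_inv)
  qed
  have "(\<lambda>(a, b). a \<otimes> b) ` (A \<times> B) \<subseteq> carrier G"
    using assms(2,3) subgroup.subset by fastforce
  then have "card (A \<times> B) \<le> order G"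
    unfolding order_def using card_inj_on_le[OF inj _ assms(1)] by blast
  then show ?thesis by (simp add: card_cartesian_product)
qed

lemma evenperm_cycle_of_list:
  "cycle cs \<Longrightarrow> evenperm (cycle_of_list cs) = even (length cs - 1)"
  by (rule evenperm_unique[OF swapidseq_ext_imp_swapidseq[OF swapidseq_ext_of_cycles]]) auto

lemma cycle_of_list_in_alt_group:
  assumes "cycle cs" "set cs \<subseteq> {1..n}" "odd (length cs)"
  shows "cycle_of_list cs \<in> carrier (alt_group n)"
proof -
  have "cycle_of_list cs permutes {1..n}" using permutes_subset[OF cycle_permutes assms(2)] .
  moreover have "evenperm (cycle_of_list cs)"
    using evenperm_cycle_of_list[OF assms(1)] assms(3) by (cases cs) auto
  ultimately show ?thesis unfolding alt_group_carrier by simp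
qed

lemma finite_carrier_alt_group: "finite (carrier (alt_group n))"
  by (rule finite_subset[OF _ finite_permutations[of "{1..n}"]]) (auto simp: alt_group_carrier)

lemma conj_in_alt_group:
  assumes "s permutes {1..n}" "g \<in> carrier (alt_group n)"
  shows "s \<circ> g \<circ> inv' s \<in> carrier (alt_group n)"
proof -
  have g: "g permutes {1..n}" "evenperm g" using assms(2) unfolding alt_group_carrier by auto
  have s': "inv' s permutes {1..n}" using permutes_inv[OF assms(1)] .
  have perm: "permutation s" "permutation g" "permutation (inv' s)"
    using assms(1) g(1) s' permutation_permutes by blast+
  have "s \<circ> g \<circ> inv' s permutes {1..n}"
    by (intro permutes_compose s' g(1) assms(1))
  moreover have "evenperm (s \<circ> g \<circ> inv' s)"
    using perm g(2) by (simp add: evenperm_comp permutation_compose evenperm_inv)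
  ultimately show ?thesis unfolding alt_group_carrier ..
qed

locale alt_subgroup =
  fixes n :: nat and L :: "(nat \<Rightarrow> nat) set"
  assumes is_subgroup: "subgroup L (alt_group n)"
begin

lemma mem_carrier: "g \<in> L \<Longrightarrow> g \<in> carrier (alt_group n)"
  using subgroup.mem_carrier[OF is_subgroup] .

lemma mem_permutes: "g \<in> L \<Longrightarrow> g permutes {1..n}"
  using mem_carrier alt_group_carrier by blast

lemma id_mem: "id \<in> L"
  using subgroup.one_closed[OF is_subgroup] by (simp add: alt_group_one)

lemma comp_closed: "g \<in> L \<Longrightarrow> h \<in> L \<Longrightarrow> g \<circ> h \<in> L"
  using subgroup.m_closed[OF is_subgroup] by (simp add: alt_group_mult)

lemma inv_closed: "g \<in> L \<Longrightarrow> inv' g \<in> L"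
  using subgroup.m_inv_closed[OF is_subgroup] alt_group_inv_equality mem_carrier by metis

lemma funpow_closed: "g \<in> L \<Longrightarrow> g ^^ k \<in> L"
  by (induction k) (simp add: id_mem, simp add: comp_closed funpow_Suc_right del: funpow.simps)

lemma finite_subgroup: "finite L"
  using finite_subset[OF _ finite_carrier_alt_group] mem_carrier by blast

lemma conj_closed: "s \<in> L \<Longrightarrow> g \<in> L \<Longrightarrow> s \<circ> g \<circ> inv' s \<in> L"
  by (simp add: comp_closed inv_closed)

lemma three_cycle_conj:
  assumes "s \<in> L" "distinct [a, b, c]" "cycle_of_list [a, b, c] \<in> L"
  shows "cycle_of_list [s a, s b, s c] \<in> L"
proof -
  have "bij s" using mem_permutes[OF assms(1)] permutes_bij by blast
  then have "s \<circ> cycle_of_list [a, b, c] \<circ> inv' s = cycle_of_list [s a, s b, s c]"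
    using conjugation_of_cycle assms(2) by fastforce
  then show ?thesis using conj_closed[OF assms(1,3)] by simp
qed

end

interpretation alt_carrier: alt_subgroup n "carrier (alt_group n)" for n
  by (rule alt_subgroup.intro) (rule group.subgroup_self[OF alt_group_is_group])

section \<open>Generating the alternating group\<close>

lemma cycle_of_list_rotate3:
  "distinct [a, b, c] \<Longrightarrow> cycle_of_list [b, c, a] = cycle_of_list [a, b, c]"
  by (auto simp: fun_eq_iff transpose_def)

lemma cycle_of_list_square3:
  "distinct [a, b, c] \<Longrightarrow> cycle_of_list [a, b, c] \<circ> cycle_of_list [a, b, c] = cycle_of_list [a, c, b]"
  by (auto simp: fun_eq_iff transpose_def)

context alt_subgroup
begin

context
  assumes n: "5 \<le> n" and base: "\<And>k. k \<in> {3..n} \<Longrightarrow> cycle_of_list [1, 2, k] \<in> L"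
begin

lemma cycle_1_k_2_mem:
  assumes "k \<in> {3..n}"
  shows "cycle_of_list [1, k, 2] \<in> L"
  using comp_closed[OF base[OF assms] base[OF assms]] cycle_of_list_square3[of 1 2 k] assms by auto

lemma cycle_2_j_k_mem:
  assumes "j \<in> {3..n}" "k \<in> {3..n}" "j \<noteq> k"
  shows "cycle_of_list [2, j, k] \<in> L"
  using three_cycle_conj[OF base[OF assms(1)] _ base[OF assms(2)]] assms by (simp add: transpose_def)

lemma cycle_1_j_k_mem:
  assumes "j \<in> {3..n}" "k \<in> {3..n}" "j \<noteq> k"
  shows "cycle_of_list [1, j, k] \<in> L"
proof -
  have "\<exists>x\<in>{3, 4, 5}. x \<noteq> j \<and> x \<noteq> k" by auto
  then obtain x where "x \<in> {3, 4, 5}" "x \<noteq> j" "x \<noteq> k" by blast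
  then have x: "x \<in> {3..n}" "x \<noteq> j" "x \<noteq> k" using n by auto
  show ?thesis
    using three_cycle_conj[OF cycle_2_j_k_mem[OF assms(1) x(1)] _ base[OF assms(2)]] assms x
    by (simp add: transpose_def)
qed

lemma cycle_mem_if_ge_3:
  assumes "a \<in> {3..n}" "b \<in> {3..n}" "c \<in> {3..n}" "distinct [a, b, c]"
  shows "cycle_of_list [a, b, c] \<in> L"
  using three_cycle_conj[OF cycle_1_k_2_mem[OF assms(1)] _ cycle_1_j_k_mem[OF assms(2,3)]] assms
  by (simp add: transpose_def)

lemma cycle_mem_if_least_first:
  assumes abc: "{a, b, c} \<subseteq> {1..n}" "distinct [a, b, c]" "a < b" "a < c"
  shows "cycle_of_list [a, b, c] \<in> L"
proof -
  from abc have "a = 1 \<and> b = 2 \<or> a = 1 \<and> c = 2 \<or> a = 1 \<and> 3 \<le> b \<and> 3 \<le> c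
      \<or> a = 2 \<and> 3 \<le> b \<and> 3 \<le> c \<or> 3 \<le> a"
    by auto
  then show ?thesis
  proof (elim disjE conjE)
    assume "a = 1" "b = 2"
    moreover have "c \<in> {3..n}" using abc \<open>b = 2\<close> by auto
    ultimately show ?thesis using base by (simp del: cycle_of_list.simps)
  next
    assume "a = 1" "c = 2"
    moreover have "b \<in> {3..n}" using abc \<open>c = 2\<close> by auto
    ultimately show ?thesis using cycle_1_k_2_mem by (simp del: cycle_of_list.simps)
  next
    assume "a = 1" "3 \<le> b" "3 \<le> c"
    then show ?thesis using cycle_1_j_k_mem[of b c] abc by (simp del: cycle_of_list.simps)
  next
    assume "a = 2" "3 \<le> b" "3 \<le> c"
    then show ?thesis using cycle_2_j_k_mem[of b c] abc by (simp del: cycle_of_list.simps)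
  next
    assume "3 \<le> a"
    then show ?thesis using cycle_mem_if_ge_3[of a b c] abc by (simp del: cycle_of_list.simps)
  qed
qed

lemma eq_carrier_if_three_cycles_through_1_2: "L = carrier (alt_group n)"
proof -
  have "three_cycles n \<subseteq> L"
  proof
    fix p assume "p \<in> three_cycles n"
    then obtain cs where cs: "p = cycle_of_list cs" "cycle cs" "length cs = 3" "set cs \<subseteq> {1..n}"
      by auto
    then obtain a b c where abc: "cs = [a, b, c]" using stupid_lemma by blast
    have d: "distinct [a, b, c]" "distinct [b, c, a]" "distinct [c, a, b]" using cs(2) abc by auto
    have sub: "{a, b, c} \<subseteq> {1..n}" "{b, c, a} \<subseteq> {1..n}" "{c, a, b} \<subseteq> {1..n}"
      using cs(4) abc by auto
    have "a < b \<and> a < c \<or> b < c \<and> b < a \<or> c < a \<and> c < b" using d(1) by auto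
    then have "cycle_of_list [a, b, c] \<in> L"
      using cycle_mem_if_least_first[OF sub(1) d(1)] cycle_mem_if_least_first[OF sub(2) d(2)]
        cycle_mem_if_least_first[OF sub(3) d(3)] cycle_of_list_rotate3[OF d(1)]
        cycle_of_list_rotate3[OF d(3)]
      by (auto simp del: cycle_of_list.simps)
    then show "p \<in> L" using cs(1) abc by simp
  qed
  then have "generate (alt_group n) (three_cycles n) \<subseteq> L"
    using group.generate_subgroup_incl[OF alt_group_is_group _ is_subgroup] by blast
  then show ?thesis
    using alt_group_carrier_as_three_cycles subgroup.subset[OF is_subgroup] by blast
qed

end

end

definition long_cycle :: "nat \<Rightarrow> nat \<Rightarrow> nat" where
  "long_cycle n = cycle_of_list [1..<Suc n]"

lemma funpow_long_cycle:
  assumes "i \<in> {1..n}"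
  shows "(long_cycle n ^^ m) i = (i - 1 + m) mod n + 1"
proof -
  have i: "i - 1 < length [1..<Suc n]" using assms by auto
  have "map (long_cycle n ^^ m) [1..<Suc n] = rotate m [1..<Suc n]"
    unfolding long_cycle_def by (rule cyclic_rotation) simp
  then have "(long_cycle n ^^ m) ([1..<Suc n] ! (i - 1)) = rotate m [1..<Suc n] ! (i - 1)"
    by (metis nth_map i)
  also have "\<dots> = [1..<Suc n] ! ((m + (i - 1)) mod n)"
    using i by (simp add: nth_rotate del: upt_Suc)
  finally show ?thesis using assms by (simp add: add.commute del: upt_Suc)
qed

lemma long_cycle_apply: "i \<in> {1..n} \<Longrightarrow> long_cycle n i = i mod n + 1"
  using funpow_long_cycle[of i n 1] by simp

lemma long_cycle_permutes: "long_cycle n permutes {1..n}"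
  using cycle_permutes[of "[1..<Suc n]"] unfolding long_cycle_def
  by (simp add: atLeastLessThanSuc_atLeastAtMost del: upt_Suc)

lemma long_cycle_funpow_self: "long_cycle n ^^ n = id"
proof
  fix i
  show "(long_cycle n ^^ n) i = id i"
  proof (cases "i \<in> {1..n}")
    case True
    then have "i - 1 < n" by auto
    then have "(i - 1 + n) mod n = i - 1" by (simp only: mod_add_self2 mod_less)
    then show ?thesis using funpow_long_cycle[OF True, of n] True by simp
  next
    case False
    then show ?thesis using permutes_not_in[OF permutes_funpow[OF long_cycle_permutes]] by simp
  qed
qed

lemma long_cycle_in_alt_group:
  assumes "odd n" "n \<le> m"
  shows "long_cycle n \<in> carrier (alt_group m)"
proof -
  have "0 < n" using assms(1) by (rule odd_pos)
  then show ?thesis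
    unfolding long_cycle_def using assms by (intro cycle_of_list_in_alt_group) (auto simp del: upt_Suc)
qed

lemma long_cycle_3: "long_cycle 3 = cycle_of_list [1, 2, 3]"
  by (simp add: long_cycle_def upt_rec numeral_3_eq_3 numeral_2_eq_2)

lemma (in alt_subgroup) consecutive_three_cycle_mem:
  assumes c: "long_cycle n \<in> L" and d: "cycle_of_list [1, 2, 3] \<in> L"
    and j: "1 \<le> j" "Suc (Suc j) \<le> n"
  shows "cycle_of_list [j, Suc j, Suc (Suc j)] \<in> L"
proof -
  have "(long_cycle n ^^ (j - 1)) i = i + (j - 1)" if "i \<in> {1..3}" for i
  proof -
    have "i - 1 + (j - 1) < n" using that j by auto
    then show ?thesis using funpow_long_cycle[of i n "j - 1"] that j(2) by auto
  qed
  then show ?thesis using three_cycle_conj[OF funpow_closed[OF c] _ d, of "j - 1"] j(1)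
    by (simp add: numeral_3_eq_3)
qed

lemma (in alt_subgroup) eq_carrier_if_long_cycle_mem:
  assumes n: "5 \<le> n" and c: "long_cycle n \<in> L" and d: "cycle_of_list [1, 2, 3] \<in> L"
  shows "L = carrier (alt_group n)"
proof (rule eq_carrier_if_three_cycles_through_1_2[OF n])
  have "k \<le> n \<longrightarrow> cycle_of_list [1, 2, k] \<in> L" if "3 \<le> k" for k
    using that
  proof (induction k rule: nat_induct_at_least)
    case base
    then show ?case using d by blast
  next
    case (Suc k)
    show ?case
    proof
      assume "Suc k \<le> n"
      then have IH: "cycle_of_list [1, 2, k] \<in> L" using Suc by (simp del: cycle_of_list.simps)
      txt \<open>Conjugating \<open>(1 2 k)\<close> by a 3-cycle of consecutive points \<open>\<ge> 3\<close> that maps \<open>k\<close>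
        to \<open>k + 1\<close> gives \<open>(1 2 (k + 1))\<close>.\<close>
      define j where "j = (if Suc (Suc k) \<le> n then k else k - 1)"
      have j: "3 \<le> j" "Suc (Suc j) \<le> n" "k = j \<or> k = Suc j"
        using Suc.hyps \<open>Suc k \<le> n\<close> n unfolding j_def by auto
      let ?s = "cycle_of_list [j, Suc j, Suc (Suc j)]"
      have "?s 1 = 1" "?s 2 = 2" "?s k = Suc k"
        using j by (auto simp: transpose_def)
      then show "cycle_of_list [1, 2, Suc k] \<in> L"
        using three_cycle_conj[OF consecutive_three_cycle_mem[OF c d, of j] _ IH] j Suc.hyps
        by (auto simp del: cycle_of_list.simps)
    qed
  qed
  then show "cycle_of_list [1, 2, k] \<in> L" if "k \<in> {3..n}" for k
    using that by (auto simp del: cycle_of_list.simps)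
qed

definition powers :: "('a \<Rightarrow> 'a) \<Rightarrow> ('a \<Rightarrow> 'a) set" where
  "powers g = range (\<lambda>k. g ^^ k)"

lemma mem_powers_self: "g \<in> powers g"
  unfolding powers_def using rangeI[of "\<lambda>k. g ^^ k" 1] by simp

lemma subgroup_powers:
  assumes g: "g \<in> carrier (alt_group n)"
  shows "subgroup (powers g) (alt_group n)"
proof -
  obtain m where m: "g ^^ m = id" "0 < m"
    using permutation_is_nilpotent alt_group_carrier'[OF g] by metis
  show ?thesis
  proof (rule group.subgroupI[OF alt_group_is_group])
    show "powers g \<subseteq> carrier (alt_group n)" unfolding powers_def using alt_carrier.funpow_closed g by blast
    show "powers g \<noteq> {}" unfolding powers_def by blast
    show "h \<otimes>\<^bsub>alt_group n\<^esub> h' \<in> powers g" if "h \<in> powers g" "h' \<in> powers g" for h h'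
      using that unfolding powers_def by (auto simp: alt_group_mult funpow_add[symmetric])
    show "inv\<^bsub>alt_group n\<^esub> h \<in> powers g" if h: "h \<in> powers g" for h
    proof -
      obtain k where h: "h = g ^^ k" using h unfolding powers_def by blast
      have "k + (m - 1) * k = m * k" "(m - 1) * k + k = m * k"
        using m(2) by (cases m; simp)+
      moreover have "g ^^ (m * k) = id" by (metis funpow_mult id_funpow m(1))
      ultimately have "g ^^ (k + (m - 1) * k) = id" "g ^^ ((m - 1) * k + k) = id"
        by (simp_all add: add.commute)
      then have "inv' h = g ^^ ((m - 1) * k)"
        unfolding h by (intro inv_unique_comp) (simp_all add: funpow_add)
      then show ?thesis using h alt_carrier.funpow_closed[OF g] unfolding powers_def
        by (simp add: alt_group_inv_equality)
    qed
  qed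
qed

lemma powers_in_vertices:
  assumes "g \<in> carrier (alt_group n)" "g \<noteq> id" "h \<in> carrier (alt_group n)" "h \<notin> powers g"
  shows "powers g \<in> intersection_graph_vertices (alt_group n)"
  using subgroup_powers[OF assms(1)] assms(2-4) mem_powers_self[of g]
  unfolding intersection_graph_vertices_def by (auto simp: alt_group_one)

lemma (in alt_subgroup) mem_if_meets_powers:
  assumes "prime p" "g ^^ p = id" and meets: "powers g \<inter> L \<noteq> {id}"
  shows "g \<in> L"
proof -
  have "id \<in> powers g" unfolding powers_def using rangeI[of "\<lambda>k. g ^^ k" 0] by simp
  then obtain k where k: "g ^^ k \<in> L" "g ^^ k \<noteq> id"
    using meets id_mem unfolding powers_def by blast
  have "\<not> p dvd k"
  proof
    assume "p dvd k"
    then have "g ^^ k = (g ^^ p) ^^ (k div p)" by (simp add: funpow_mult)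
    then show False using assms(2) k(2) by simp
  qed
  then have "gcd k p = 1"
    using prime_imp_coprime[OF assms(1)] by (simp add: coprime_commute coprime_iff_gcd_eq_1)
  moreover have "k \<noteq> 0" using \<open>\<not> p dvd k\<close> by (metis dvd_0_right)
  ultimately obtain x y where xy: "k * x = p * y + 1" using bezout_nat[of k p] by auto
  have "(g ^^ k) ^^ x = g ^^ (p * y + 1)" by (simp add: funpow_mult xy)
  also have "\<dots> = (g ^^ p) ^^ y \<circ> g" by (simp add: funpow_mult funpow_Suc_right del: funpow.simps)
  also have "\<dots> = g" using assms(2) by simp
  finally show ?thesis using funpow_closed[OF k(1)] by metis
qed

section \<open>Fixed-point-free permutations of prime degree\<close>

lemma card_dvd_if_least_power_const:
  assumes x: "x permutes S" "finite S" and e: "\<And>a. a \<in> S \<Longrightarrow> least_power x a = e"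
  shows "e dvd card S"
proof -
  have perm: "permutation x" using x permutation_permutes by blast
  define orb where "orb a = set (support x a)" for a
  have self: "a \<in> orb a" for a
    unfolding orb_def using least_power_of_permutation(2)[OF perm, of a] by force
  have orb_sub: "orb a \<subseteq> S" if "a \<in> S" for a
    unfolding orb_def using permutes_in_image[OF permutes_funpow[OF x(1)]] that by auto
  have card_orb: "card (orb a) = e" if "a \<in> S" for a
    unfolding orb_def using distinct_card[OF cycle_of_permutation[OF perm, of a]] e[OF that] by simp
  have orb_eq: "b \<in> orb a \<longleftrightarrow> orb b = orb a" for a b
    using disjointD[OF disjoint_support[OF perm], of "orb a" "orb b"] self[of b]
    unfolding orb_def by blast
  define r where "r = {(a, b). a \<in> S \<and> b \<in> S \<and> orb a = orb b}"
  have "equiv S r" unfolding r_def equiv_def refl_on_def sym_def trans_def by auto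
  moreover have "e dvd card X" if X: "X \<in> S // r" for X
  proof -
    obtain a where a: "a \<in> S" "X = r `` {a}" using X unfolding quotient_def by blast
    then have "X = {b \<in> S. orb a = orb b}" unfolding r_def by auto
    also have "\<dots> = orb a" using orb_eq orb_sub[OF a(1)] by blast
    finally show ?thesis using card_orb[OF a(1)] by simp
  qed
  ultimately show ?thesis using equiv_imp_dvd_card[OF x(2)] by blast
qed

lemma conj_long_cycle_eq_cycle_of_list:
  assumes dist: "distinct cs" and len: "length cs = p" and set_cs: "set cs = {1..p}"
  obtains s where "s permutes {1..p}" "s \<circ> long_cycle p \<circ> inv' s = cycle_of_list cs"
proof -
  define s where "s i = (if i \<in> {1..p} then cs ! (i - 1) else i)" for i
  have "inj_on s {1..p}"
    using dist len unfolding s_def inj_on_def by (auto simp: nth_eq_iff_index_eq)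
  moreover have "s ` {1..p} \<subseteq> {1..p}"
  proof -
    have "cs ! (i - 1) \<in> {1..p}" if "i \<in> {1..p}" for i
      using that set_cs len nth_mem[of "i - 1" cs] by auto
    then show ?thesis unfolding s_def by auto
  qed
  ultimately have "bij_betw s {1..p} {1..p}"
    unfolding bij_betw_def using endo_inj_surj[of "{1..p}" s] by simp
  then have s: "s permutes {1..p}" by (rule bij_imp_permutes) (auto simp: s_def)
  have "map s [1..<Suc p] = cs" using len by (intro nth_equalityI) (simp_all add: s_def del: upt_Suc)
  then have "s \<circ> long_cycle p \<circ> inv' s = cycle_of_list cs"
    using conjugation_of_cycle[of "[1..<Suc p]" s] permutes_bij[OF s] unfolding long_cycle_def by simp
  then show ?thesis using that s by blast
qed

lemma fixed_point_free_is_conj_long_cycle: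
  assumes p: "prime p" and x: "x permutes {1..p}" "x \<noteq> id"
    and fpf: "\<And>k a. a \<in> {1..p} \<Longrightarrow> (x ^^ k) a = a \<Longrightarrow> x ^^ k = id"
  obtains s where "s permutes {1..p}" "x = s \<circ> long_cycle p \<circ> inv' s"
proof -
  have perm: "permutation x" using x(1) permutation_permutes by blast
  have one: "1 \<in> {1..p}" using prime_ge_1_nat[OF p] by simp
  txt \<open>Every orbit of \<open>x\<close> has the same length, which divides the prime \<open>p\<close>; so the orbit
    of 1 is all of \<open>{1..p}\<close>.\<close>
  have same_lp: "least_power x a = least_power x 1" if "a \<in> {1..p}" for a
  proof -
    have "x ^^ least_power x b = id" if "b \<in> {1..p}" for b
      using fpf[OF that least_power_of_permutation(1)[OF perm]] .
    then show ?thesis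
      using least_power_dvd[OF perm] that one by (metis dvd_antisym id_apply)
  qed
  define cs where "cs = support x 1"
  have "least_power x 1 dvd p"
    using card_dvd_if_least_power_const[OF x(1) _ same_lp] by simp
  moreover have "least_power x 1 \<noteq> 1"
    using fpf[OF one, of 1] x(2) least_power_of_permutation(1)[OF perm, of 1] by auto
  ultimately have "least_power x 1 = p" using p by (auto simp: prime_nat_iff)
  then have len: "length cs = p" unfolding cs_def by simp
  have dist: "distinct cs" using cycle_of_permutation[OF perm] unfolding cs_def by simp
  have "set cs \<subseteq> {1..p}"
    unfolding cs_def using permutes_in_image[OF permutes_funpow[OF x(1)]] one by auto
  then have set_cs: "set cs = {1..p}"
    using card_subset_eq[of "{1..p}" "set cs"] len dist by (simp add: distinct_card)
  have x_eq: "x = cycle_of_list cs"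
  proof
    fix b show "x b = cycle_of_list cs b"
      using cycle_restrict[OF perm, of b 1] permutes_not_in[OF x(1)] id_outside_supp[of b cs] set_cs
      unfolding cs_def by (cases "b \<in> {1..p}") auto
  qed
  obtain s where "s permutes {1..p}" "s \<circ> long_cycle p \<circ> inv' s = cycle_of_list cs"
    by (rule conj_long_cycle_eq_cycle_of_list[OF dist len set_cs])
  then show ?thesis using that x_eq by metis
qed

definition conj_image :: "(nat \<Rightarrow> nat) \<Rightarrow> (nat \<Rightarrow> nat) set \<Rightarrow> (nat \<Rightarrow> nat) set" where
  "conj_image s L = (\<lambda>g. s \<circ> g \<circ> inv' s) ` L"

lemma conj_cancel: "s permutes S \<Longrightarrow> inv' s \<circ> (s \<circ> g \<circ> inv' s) \<circ> s = g"
  using permutes_inverses by (fastforce simp: fun_eq_iff)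

lemma card_conj_image: "s permutes S \<Longrightarrow> card (conj_image s L) = card L"
  unfolding conj_image_def by (rule card_image, rule inj_onI) (metis conj_cancel)

lemma (in alt_subgroup) subgroup_conj_image:
  assumes s: "s permutes {1..n}"
  shows "subgroup (conj_image s L) (alt_group n)"
proof (rule group.subgroupI[OF alt_group_is_group])
  show "conj_image s L \<subseteq> carrier (alt_group n)"
    unfolding conj_image_def using conj_in_alt_group[OF s] mem_carrier by blast
  show "conj_image s L \<noteq> {}" unfolding conj_image_def using id_mem by blast
  show "a \<otimes>\<^bsub>alt_group n\<^esub> b \<in> conj_image s L"
    if ab: "a \<in> conj_image s L" "b \<in> conj_image s L" for a b
  proof -
    obtain g h where "g \<in> L" "h \<in> L" "a = s \<circ> g \<circ> inv' s" "b = s \<circ> h \<circ> inv' s"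
      using ab unfolding conj_image_def by blast
    moreover have "(s \<circ> g \<circ> inv' s) \<circ> (s \<circ> h \<circ> inv' s) = s \<circ> (g \<circ> h) \<circ> inv' s"
      using permutes_inverses[OF s] by (simp add: fun_eq_iff)
    ultimately show ?thesis unfolding conj_image_def by (auto simp: alt_group_mult comp_closed)
  qed
  show "inv\<^bsub>alt_group n\<^esub> a \<in> conj_image s L" if a: "a \<in> conj_image s L" for a
  proof -
    obtain g where g: "g \<in> L" "a = s \<circ> g \<circ> inv' s"
      using a unfolding conj_image_def by blast
    have "inv' a = s \<circ> inv' g \<circ> inv' s"
      using permutes_inverses[OF s] permutes_inverses[OF mem_permutes[OF g(1)]] unfolding g(2)
      by (intro inv_unique_comp) (simp_all add: fun_eq_iff)
    moreover have "a \<in> carrier (alt_group n)" using g conj_in_alt_group[OF s mem_carrier] by simp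
    ultimately show ?thesis using g(1) inv_closed unfolding conj_image_def
      by (auto simp: alt_group_inv_equality)
  qed
qed

lemma (in alt_subgroup) conj_image_in_vertices:
  assumes s: "s permutes {1..n}" and L: "L \<in> intersection_graph_vertices (alt_group n)"
  shows "conj_image s L \<in> intersection_graph_vertices (alt_group n)"
proof -
  obtain g where g: "g \<in> L" "g \<noteq> id"
    using L id_mem unfolding intersection_graph_vertices_def by (auto simp: alt_group_one)
  have "s \<circ> g \<circ> inv' s \<noteq> id" using conj_cancel[OF s, of g] permutes_inv_o[OF s] g(2) by auto
  then have "conj_image s L \<noteq> {id}" using g(1) unfolding conj_image_def by blast
  moreover have "conj_image s L \<noteq> carrier (alt_group n)"
  proof
    assume "conj_image s L = carrier (alt_group n)"
    then have "card L = card (carrier (alt_group n))" using card_conj_image[OF s, of L] by simp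
    then have "L = carrier (alt_group n)"
      using card_subset_eq[OF finite_carrier_alt_group] mem_carrier by blast
    then show False using L unfolding intersection_graph_vertices_def by simp
  qed
  ultimately show ?thesis
    using subgroup_conj_image[OF s] unfolding intersection_graph_vertices_def by (simp add: alt_group_one)
qed

definition point_stabilizer :: "nat \<Rightarrow> nat \<Rightarrow> (nat \<Rightarrow> nat) set" where
  "point_stabilizer n a = {g \<in> carrier (alt_group n). g a = a}"

lemma subgroup_point_stabilizer: "subgroup (point_stabilizer n a) (alt_group n)"
proof (rule group.subgroupI[OF alt_group_is_group])
  show "point_stabilizer n a \<subseteq> carrier (alt_group n)" unfolding point_stabilizer_def by blast
  show "point_stabilizer n a \<noteq> {}"
    using alt_carrier.id_mem unfolding point_stabilizer_def by force
  show "inv\<^bsub>alt_group n\<^esub> g \<in> point_stabilizer n a" if "g \<in> point_stabilizer n a" for g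
    using that alt_group_inv_closed[of g n] permutes_inv_eq[of g "{1..n}"]
    unfolding point_stabilizer_def by (auto simp: alt_group_inv_equality alt_group_carrier)
  show "g \<otimes>\<^bsub>alt_group n\<^esub> h \<in> point_stabilizer n a"
    if "g \<in> point_stabilizer n a" "h \<in> point_stabilizer n a" for g h
    using that alt_carrier.comp_closed unfolding point_stabilizer_def by (auto simp: alt_group_mult)
qed

lemma exists_three_cycle_fixing:
  assumes "5 \<le> n"
  obtains t where "t \<in> carrier (alt_group n)" "t \<noteq> id" "t a = a" "t b = b"
proof -
  have "card {a, b} \<le> 2" by (cases "a = b") auto
  then have "3 \<le> card ({1..n} - {a, b})"
    using assms diff_card_le_card_Diff[of "{a, b}" "{1..n}"] by simp
  then obtain T where T: "T \<subseteq> {1..n} - {a, b}" "card T = 3"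
    by (metis obtain_subset_with_card_n)
  then obtain x y z where xyz: "T = {x, y, z}" "x \<noteq> y" "y \<noteq> z" "x \<noteq> z"
    by (auto simp: card_3_iff)
  let ?t = "cycle_of_list [x, y, z]"
  have "?t \<in> carrier (alt_group n)" using T xyz by (intro cycle_of_list_in_alt_group) auto
  moreover have "?t \<noteq> id"
  proof
    assume "?t = id"
    then have "?t x = x" by simp
    then show False using xyz by (simp add: transpose_def)
  qed
  moreover have "?t a = a" "?t b = b" using T xyz by (auto intro!: id_outside_supp)
  ultimately show ?thesis by (rule that)
qed

lemma alt_group_moves_point:
  assumes "3 \<le> n" "a \<in> {1..n}"
  obtains t where "t \<in> carrier (alt_group n)" "t a \<noteq> a"
proof -
  have "2 \<le> card ({1..n} - {a})" using assms by simp
  then obtain T where T: "T \<subseteq> {1..n} - {a}" "card T = 2"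
    by (metis obtain_subset_with_card_n)
  then obtain x y where xy: "T = {x, y}" "x \<noteq> y" by (auto simp: card_2_iff)
  let ?t = "cycle_of_list [a, x, y]"
  have "?t \<in> carrier (alt_group n)" using T xy assms(2) by (intro cycle_of_list_in_alt_group) auto
  moreover have "?t a \<noteq> a" using T xy by (auto simp: transpose_def)
  ultimately show ?thesis using that by blast
qed

lemma point_stabilizer_in_vertices:
  assumes "5 \<le> n" "a \<in> {1..n}"
  shows "point_stabilizer n a \<in> intersection_graph_vertices (alt_group n)"
proof -
  obtain t where "t \<in> carrier (alt_group n)" "t \<noteq> id" "t a = a"
    using exists_three_cycle_fixing[OF assms(1), of a a] by metis
  then have "point_stabilizer n a \<noteq> {id}" unfolding point_stabilizer_def by blast
  moreover obtain t' where "t' \<in> carrier (alt_group n)" "t' a \<noteq> a"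
    using alt_group_moves_point[of n a] assms by force
  then have "point_stabilizer n a \<noteq> carrier (alt_group n)" unfolding point_stabilizer_def by blast
  ultimately show ?thesis using subgroup_point_stabilizer
    unfolding intersection_graph_vertices_def by (simp add: alt_group_one)
qed

lemma point_stabilizers_intersect:
  assumes "5 \<le> n"
  shows "point_stabilizer n a \<inter> point_stabilizer n b \<noteq> {id}"
proof -
  obtain t where "t \<in> carrier (alt_group n)" "t \<noteq> id" "t a = a" "t b = b"
    using exists_three_cycle_fixing[OF assms] by metis
  then show ?thesis unfolding point_stabilizer_def by blast
qed

lemma (in alt_subgroup) alt_subgroup_inter_point_stabilizer:
  "alt_subgroup n (L \<inter> point_stabilizer n a)"
  by (rule alt_subgroup.intro)
    (rule group.subgroups_Inter_pair[OF alt_group_is_group is_subgroup subgroup_point_stabilizer])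

lemma (in alt_subgroup) card_orbit_mult_card_stabilizer_le:
  assumes "Q \<subseteq> (\<lambda>g. g a) ` L"
  shows "card Q * card (L \<inter> point_stabilizer n a) \<le> card L"
proof -
  have "\<forall>q\<in>Q. \<exists>g. g \<in> L \<and> g a = q" using assms by blast
  then obtain f where f: "\<And>q. q \<in> Q \<Longrightarrow> f q \<in> L \<and> f q a = q" by metis
  let ?S = "L \<inter> point_stabilizer n a"
  have key: "q = q' \<and> h = h'"
    if qh: "q \<in> Q" "h \<in> ?S" "q' \<in> Q" "h' \<in> ?S" and eq: "f q \<circ> h = f q' \<circ> h'" for q h q' h'
  proof -
    have "q = f q (h a)" "q' = f q' (h' a)" using qh f unfolding point_stabilizer_def by auto
    then have q: "q = q'" using eq by (metis comp_apply)
    have "inj (f q)" using f[OF qh(1)] mem_permutes permutes_inj by blast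
    then have "h = h'" using eq q by (simp add: fun_eq_iff inj_eq)
    then show ?thesis using q by simp
  qed
  have "inj_on (\<lambda>(q, h). f q \<circ> h) (Q \<times> ?S)"
    using key unfolding inj_on_def by auto
  moreover have "(\<lambda>(q, h). f q \<circ> h) ` (Q \<times> ?S) \<subseteq> L" using f comp_closed by auto
  ultimately have "card (Q \<times> ?S) \<le> card L" using card_inj_on_le[OF _ _ finite_subgroup] by blast
  then show ?thesis by (simp add: card_cartesian_product)
qed

lemma (in alt_subgroup) inter_point_stabilizer_nontrivial:
  assumes trans: "\<And>b. b \<in> {1..n} \<Longrightarrow> \<exists>g\<in>L. g a = b"
    and h: "h \<in> L" "h \<noteq> id" "h a = a" and b: "b \<in> {1..n}"
  shows "L \<inter> point_stabilizer n b \<noteq> {id}"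
proof -
  obtain g where g: "g \<in> L" "g a = b" using trans[OF b] by blast
  have "inv' g b = a" using permutes_inv_eq[OF mem_permutes[OF g(1)]] g(2) by simp
  then have "(g \<circ> h \<circ> inv' g) b = b" using g(2) h(3) by simp
  moreover have "g \<circ> h \<circ> inv' g \<noteq> id"
    using conj_cancel[OF mem_permutes[OF g(1)], of h] permutes_inv_o[OF mem_permutes[OF g(1)]] h(2)
    by auto
  moreover have "g \<circ> h \<circ> inv' g \<in> L" using conj_closed g(1) h(1) by blast
  ultimately show ?thesis using mem_carrier unfolding point_stabilizer_def by blast
qed

lemma conj_image_inter_point_stabilizer:
  assumes s: "s permutes {1..n}" and L: "L \<subseteq> carrier (alt_group n)"
    and "L \<inter> point_stabilizer n (inv' s b) \<noteq> {id}" "id \<in> L"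
  shows "conj_image s L \<inter> point_stabilizer n b \<noteq> {id}"
proof -
  have "id \<in> point_stabilizer n (inv' s b)"
    unfolding point_stabilizer_def using alt_carrier.id_mem by simp
  then obtain w where "w \<in> L" "w \<in> point_stabilizer n (inv' s b)" "w \<noteq> id" using assms(3,4) by blast
  then have w: "w \<in> L" "w \<noteq> id" "w (inv' s b) = inv' s b" unfolding point_stabilizer_def by auto
  have "(s \<circ> w \<circ> inv' s) b = b" using w(3) permutes_inverses[OF s] by simp
  moreover have "s \<circ> w \<circ> inv' s \<noteq> id" using conj_cancel[OF s, of w] permutes_inv_o[OF s] w(2) by auto
  moreover have "s \<circ> w \<circ> inv' s \<in> carrier (alt_group n)" using conj_in_alt_group[OF s] L w(1) by blast
  ultimately show ?thesis using w(1) unfolding conj_image_def point_stabilizer_def by blast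
qed

section \<open>The lower bound\<close>

lemma long_cycle_notin_powers_3:
  assumes "5 \<le> n"
  shows "long_cycle n \<notin> powers (long_cycle 3)"
proof -
  have "(long_cycle 3 ^^ k) 4 = 4" for k
    using permutes_not_in[OF permutes_funpow[OF long_cycle_permutes]] by simp
  moreover have "long_cycle n 4 = 5" using assms by (simp add: long_cycle_apply)
  ultimately show ?thesis unfolding powers_def by auto
qed

lemma long_cycle_3_notin_powers:
  assumes "5 \<le> n"
  shows "long_cycle 3 \<notin> powers (long_cycle n)"
proof
  let ?c = "long_cycle n" and ?d = "long_cycle 3"
  have d: "?d 1 = 2" "?d 3 = 1" by (simp_all add: long_cycle_3 transpose_def)
  assume "?d \<in> powers ?c"
  then obtain k where k: "?d = ?c ^^ k" unfolding powers_def by blast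
  have "k mod n = 1" using funpow_long_cycle[of 1 n k] d(1) assms k by auto
  then have "(2 + k) mod n = 3" using assms mod_add_right_eq[of 2 k n] by simp
  then have "(?c ^^ k) 3 = 4" using funpow_long_cycle[of 3 n k] assms by simp
  then show False using d(2) k by simp
qed

lemma powers_long_cycles_in_vertices:
  assumes "odd n" "5 \<le> n"
  shows "powers (long_cycle n) \<in> intersection_graph_vertices (alt_group n)"
    and "powers (long_cycle 3) \<in> intersection_graph_vertices (alt_group n)"
proof -
  have c: "long_cycle n \<in> carrier (alt_group n)" using assms by (intro long_cycle_in_alt_group) auto
  have d: "long_cycle 3 \<in> carrier (alt_group n)" using assms by (intro long_cycle_in_alt_group) auto
  have "long_cycle n 1 = 2" "long_cycle 3 1 = 2" using assms by (simp_all add: long_cycle_apply)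
  then have "long_cycle n \<noteq> id" "long_cycle 3 \<noteq> id" by auto
  then show "powers (long_cycle n) \<in> intersection_graph_vertices (alt_group n)"
    and "powers (long_cycle 3) \<in> intersection_graph_vertices (alt_group n)"
    using powers_in_vertices c d long_cycle_notin_powers_3[OF assms(2)]
      long_cycle_3_notin_powers[OF assms(2)] by blast+
qed

lemma alt_intersection_graph_dist_ge_3:
  assumes p: "prime n" "5 \<le> n"
  shows "3 \<le> graph_dist (intersection_graph_vertices (alt_group n)) (intersection_graph_adj (alt_group n))
           (powers (long_cycle n)) (powers (long_cycle 3))"
proof (rule graph_dist_ge_3I)
  let ?c = "long_cycle n" and ?d = "long_cycle 3"
  have c: "?c \<in> carrier (alt_group n)" using p prime_odd_nat by (intro long_cycle_in_alt_group) auto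
  show "powers ?c \<noteq> powers ?d"
    using long_cycle_notin_powers_3[OF p(2)] mem_powers_self by blast
  interpret C: alt_subgroup n "powers ?c" by (rule alt_subgroup.intro) (rule subgroup_powers[OF c])
  show "\<not> intersection_graph_adj (alt_group n) (powers ?c) (powers ?d)"
    using C.mem_if_meets_powers[of 3 ?d] long_cycle_funpow_self long_cycle_3_notin_powers[OF p(2)]
    unfolding intersection_graph_adj_def by (auto simp: alt_group_one Int_commute)
  show False if L: "L \<in> intersection_graph_vertices (alt_group n)"
    and adj: "intersection_graph_adj (alt_group n) (powers ?c) L"
      "intersection_graph_adj (alt_group n) L (powers ?d)" for L
  proof -
    interpret alt_subgroup n L
      using L unfolding intersection_graph_vertices_def by (intro alt_subgroup.intro) simp
    have "?c \<in> L" using mem_if_meets_powers[OF p(1) long_cycle_funpow_self] adj(1)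
      unfolding intersection_graph_adj_def by (simp add: alt_group_one)
    moreover have "?d \<in> L"
      using mem_if_meets_powers[of 3 ?d] long_cycle_funpow_self adj(2)
      unfolding intersection_graph_adj_def by (simp add: alt_group_one Int_commute)
    then have "cycle_of_list [1, 2, 3] \<in> L" by (simp only: long_cycle_3)
    ultimately have "L = carrier (alt_group n)" using eq_carrier_if_long_cycle_mem p(2) by blast
    then show False using L unfolding intersection_graph_vertices_def by simp
  qed
qed


section \<open>The Mathieu group \<open>M\<^sub>1\<^sub>1\<close>\<close>

text \<open>The 66 blocks of the Steiner system \<open>S(4, 5, 11)\<close>. Their stabiliser in \<open>A\<^sub>1\<^sub>1\<close> is
  \<open>M\<^sub>1\<^sub>1\<close>, of order 7920, generated by \<open>m11_a\<close> and \<open>m11_b\<close>.\<close>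

definition steiner_block_list :: "nat list list" where
  "steiner_block_list =
    [[1, 2, 3, 4, 10], [1, 2, 3, 5, 8], [1, 2, 3, 6, 7], [1, 2, 3, 9, 11], [1, 2, 4, 5, 9], [1, 2, 4, 6, 8],
     [1, 2, 4, 7, 11], [1, 2, 5, 6, 11], [1, 2, 5, 7, 10], [1, 2, 6, 9, 10], [1, 2, 7, 8, 9], [1, 2, 8, 10, 11],
     [1, 3, 4, 5, 6], [1, 3, 4, 7, 9], [1, 3, 4, 8, 11], [1, 3, 5, 7, 11], [1, 3, 5, 9, 10], [1, 3, 6, 8, 9],
     [1, 3, 6, 10, 11], [1, 3, 7, 8, 10], [1, 4, 5, 7, 8], [1, 4, 5, 10, 11], [1, 4, 6, 7, 10], [1, 4, 6, 9, 11],
     [1, 4, 8, 9, 10], [1, 5, 6, 7, 9], [1, 5, 6, 8, 10], [1, 5, 8, 9, 11], [1, 6, 7, 8, 11], [1, 7, 9, 10, 11],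
     [2, 3, 4, 5, 11], [2, 3, 4, 6, 9], [2, 3, 4, 7, 8], [2, 3, 5, 6, 10], [2, 3, 5, 7, 9], [2, 3, 6, 8, 11],
     [2, 3, 7, 10, 11], [2, 3, 8, 9, 10], [2, 4, 5, 6, 7], [2, 4, 5, 8, 10], [2, 4, 6, 10, 11], [2, 4, 7, 9, 10],
     [2, 4, 8, 9, 11], [2, 5, 6, 8, 9], [2, 5, 7, 8, 11], [2, 5, 9, 10, 11], [2, 6, 7, 8, 10], [2, 6, 7, 9, 11],
     [3, 4, 5, 7, 10], [3, 4, 5, 8, 9], [3, 4, 6, 7, 11], [3, 4, 6, 8, 10], [3, 4, 9, 10, 11], [3, 5, 6, 7, 8],
     [3, 5, 6, 9, 11], [3, 5, 8, 10, 11], [3, 6, 7, 9, 10], [3, 7, 8, 9, 11], [4, 5, 6, 8, 11], [4, 5, 6, 9, 10],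
     [4, 5, 7, 9, 11], [4, 6, 7, 8, 9], [4, 7, 8, 10, 11], [5, 6, 7, 10, 11], [5, 7, 8, 9, 10], [6, 8, 9, 10, 11]]"

definition steiner_blocks :: "nat set set" where
  "steiner_blocks = set (map set steiner_block_list)"

definition M11 :: "(nat \<Rightarrow> nat) set" where
  "M11 = {g \<in> carrier (alt_group 11). \<forall>B\<in>steiner_blocks. g ` B \<in> steiner_blocks}"

abbreviation m11_a :: "nat \<Rightarrow> nat" where
  "m11_a \<equiv> long_cycle 11"

definition m11_b :: "nat \<Rightarrow> nat" where
  "m11_b = cycle_of_list [3, 7, 11, 8] \<circ> cycle_of_list [4, 10, 5, 6]"

lemma m11_b_simps [simp]:
  "m11_b 1 = 1" "m11_b (Suc 0) = 1" "m11_b 2 = 2" "m11_b 3 = 7" "m11_b 4 = 10" "m11_b 5 = 6"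
  "m11_b 6 = 4" "m11_b 7 = 11" "m11_b 8 = 3" "m11_b 9 = 9" "m11_b 10 = 5" "m11_b 11 = 8"
  by (simp_all add: m11_b_def transpose_def)

lemma preserves_steiner_blocksI:
  assumes "\<forall>l\<in>set steiner_block_list. sort (map f l) \<in> set steiner_block_list"
  shows "\<forall>B\<in>steiner_blocks. f ` B \<in> steiner_blocks"
proof
  fix B assume "B \<in> steiner_blocks"
  then obtain l where l: "l \<in> set steiner_block_list" "B = set l" unfolding steiner_blocks_def by auto
  then have "f ` B = set (sort (map f l))" by simp
  moreover have "set (sort (map f l)) \<in> set ` set steiner_block_list" using assms l(1) by blast
  ultimately show "f ` B \<in> steiner_blocks" unfolding steiner_blocks_def by simp
qed

lemma m11_a_simps [simp]:
  "m11_a 1 = 2" "m11_a (Suc 0) = 2" "m11_a 2 = 3" "m11_a 3 = 4" "m11_a 4 = 5" "m11_a 5 = 6"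
  "m11_a 6 = 7" "m11_a 7 = 8" "m11_a 8 = 9" "m11_a 9 = 10" "m11_a 10 = 11" "m11_a 11 = 1"
  by (simp_all add: long_cycle_apply)

lemma m11_a_in_M11: "m11_a \<in> M11"
proof -
  have "\<forall>l\<in>set steiner_block_list. sort (map m11_a l) \<in> set steiner_block_list"
    by (simp add: steiner_block_list_def)
  then show ?thesis
    unfolding M11_def using long_cycle_in_alt_group[of 11 11] preserves_steiner_blocksI by simp
qed

lemma m11_b_in_M11: "m11_b \<in> M11"
proof -
  have p: "cycle_of_list [3, 7, 11, 8::nat] permutes {1..11}" "cycle_of_list [4, 10, 5, 6::nat] permutes {1..11}"
    by (rule permutes_subset[OF cycle_permutes], simp)+
  have "\<not> evenperm (cycle_of_list [3, 7, 11, 8::nat])" "\<not> evenperm (cycle_of_list [4, 10, 5, 6::nat])"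
    by (subst evenperm_cycle_of_list; simp)+
  then have "evenperm m11_b"
    unfolding m11_b_def evenperm_comp[OF permutation_of_cycle permutation_of_cycle] by blast
  moreover have "m11_b permutes {1..11}" unfolding m11_b_def by (rule permutes_compose[OF p(2,1)])
  moreover have "\<forall>l\<in>set steiner_block_list. sort (map m11_b l) \<in> set steiner_block_list"
    by (simp add: steiner_block_list_def)
  ultimately show ?thesis unfolding M11_def alt_group_carrier using preserves_steiner_blocksI by simp
qed

lemma subgroup_M11: "subgroup M11 (alt_group 11)"
proof (rule group.subgroupI[OF alt_group_is_group])
  show "M11 \<subseteq> carrier (alt_group 11)" unfolding M11_def by blast
  show "M11 \<noteq> {}" using m11_a_in_M11 by blast
  show "g \<otimes>\<^bsub>alt_group 11\<^esub> h \<in> M11" if gh: "g \<in> M11" "h \<in> M11" for g h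
  proof -
    have "(g \<circ> h) ` B \<in> steiner_blocks" if "B \<in> steiner_blocks" for B
    proof -
      have "h ` B \<in> steiner_blocks" using gh(2) that unfolding M11_def by blast
      then have "g ` h ` B \<in> steiner_blocks" using gh(1) unfolding M11_def by blast
      then show ?thesis by (simp add: image_comp)
    qed
    then show ?thesis using gh alt_carrier.comp_closed unfolding M11_def by (simp add: alt_group_mult)
  qed
  show "inv\<^bsub>alt_group 11\<^esub> g \<in> M11" if g: "g \<in> M11" for g
  proof -
    have carrier: "g \<in> carrier (alt_group 11)" and blocks: "\<forall>B\<in>steiner_blocks. g ` B \<in> steiner_blocks"
      using g unfolding M11_def by auto
    have "inj g" using alt_carrier.mem_permutes[OF carrier] permutes_inj by blast
    moreover have "finite steiner_blocks" unfolding steiner_blocks_def by simp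
    ultimately have "(\<lambda>B. g ` B) ` steiner_blocks = steiner_blocks"
      using blocks by (intro endo_inj_surj) (auto simp: inj_on_def inj_image_eq_iff)
    then have "inv' g ` B \<in> steiner_blocks" if "B \<in> steiner_blocks" for B
      using that \<open>inj g\<close> by (metis image_iff image_inv_f_f)
    then show ?thesis
      unfolding M11_def using carrier alt_carrier.inv_closed by (simp add: alt_group_inv_equality)
  qed
qed

interpretation M11: alt_subgroup 11 M11
  by (rule alt_subgroup.intro) (rule subgroup_M11)

lemmas M11_words = M11.comp_closed M11.id_mem m11_a_in_M11 m11_b_in_M11

lemma M11_ne_carrier: "M11 \<noteq> carrier (alt_group 11)"
proof
  let ?t = "cycle_of_list [1, 2, 5 :: nat]"
  assume "M11 = carrier (alt_group 11)"
  moreover have "?t \<in> carrier (alt_group 11)" by (rule cycle_of_list_in_alt_group) auto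
  moreover have "{1, 2, 3, 4, 10} \<in> steiner_blocks"
    unfolding steiner_blocks_def steiner_block_list_def by simp
  ultimately have "?t ` {1, 2, 3, 4, 10} \<in> steiner_blocks" unfolding M11_def by blast
  moreover have "?t ` {1, 2, 3, 4, 10} = set [2, 3, 4, 5, 10]" by (auto simp: transpose_def)
  ultimately obtain l where l: "l \<in> set steiner_block_list" "set l = set [2, 3, 4, 5, 10 :: nat]"
    unfolding steiner_blocks_def by auto
  have "\<forall>l\<in>set steiner_block_list. sorted l \<and> distinct l" by (simp add: steiner_block_list_def)
  then have "l = [2, 3, 4, 5, 10]" using l by (intro sorted_distinct_set_unique) auto
  then show False using l(1) by (simp add: steiner_block_list_def)
qed

lemma M11_in_vertices: "M11 \<in> intersection_graph_vertices (alt_group 11)"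
proof -
  have "m11_a \<noteq> id"
  proof
    assume "m11_a = id"
    then show False using m11_a_simps(1) by simp
  qed
  then have "M11 \<noteq> {id}" using m11_a_in_M11 by blast
  then show ?thesis using subgroup_M11 M11_ne_carrier
    unfolding intersection_graph_vertices_def by (simp add: alt_group_one)
qed

lemma M11_transitive: "b \<in> {1..11} \<Longrightarrow> \<exists>g\<in>M11. g 1 = b"
  using M11.funpow_closed[OF m11_a_in_M11, of "b - 1"] funpow_long_cycle[of 1 11 "b - 1"] by auto

lemma M11_inter_point_stabilizer: "b \<in> {1..11} \<Longrightarrow> M11 \<inter> point_stabilizer 11 b \<noteq> {id}"
proof (rule M11.inter_point_stabilizer_nontrivial[OF M11_transitive m11_b_in_M11])
  show "m11_b \<noteq> id"
  proof
    assume "m11_b = id"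
    then show False using m11_b_simps(4) by simp
  qed
qed simp_all

lemma M11_orbit_fixing_1:
  "{2, 3, 4, 5, 6, 7, 8, 9, 10, 11} \<subseteq> (\<lambda>g. g 2) ` (M11 \<inter> point_stabilizer 11 1)"
proof -
  let ?W = "{id,
      m11_b \<circ> m11_a \<circ> m11_a \<circ> m11_b \<circ> m11_a \<circ> m11_a \<circ> m11_a,
      m11_b \<circ> m11_a \<circ> m11_b \<circ> m11_b \<circ> m11_a \<circ> m11_a,
      m11_b \<circ> m11_b \<circ> m11_b \<circ> m11_a \<circ> m11_b \<circ> m11_b \<circ> m11_a \<circ> m11_a,
      m11_a \<circ> m11_b \<circ> m11_b \<circ> m11_a \<circ> m11_a,
      m11_a \<circ> m11_b \<circ> m11_a \<circ> m11_b \<circ> m11_a \<circ> m11_a \<circ> m11_a \<circ> m11_a,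
      m11_a \<circ> m11_a \<circ> m11_b \<circ> m11_a \<circ> m11_a \<circ> m11_a,
      m11_a \<circ> m11_b \<circ> m11_a \<circ> m11_b \<circ> m11_b \<circ> m11_b \<circ> m11_a \<circ> m11_a \<circ> m11_a,
      m11_b \<circ> m11_b \<circ> m11_a \<circ> m11_b \<circ> m11_b \<circ> m11_a \<circ> m11_a,
      m11_a \<circ> m11_a \<circ> m11_b \<circ> m11_a \<circ> m11_a \<circ> m11_b \<circ> m11_a}"
  have "{2, 3, 4, 5, 6, 7, 8, 9, 10, 11} \<subseteq> (\<lambda>g. g 2) ` ?W" by simp
  also have "\<dots> \<subseteq> (\<lambda>g. g 2) ` (M11 \<inter> point_stabilizer 11 1)"
    by (rule image_mono) (simp add: point_stabilizer_def M11_words M11.mem_carrier)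
  finally show ?thesis .
qed

lemma M11_orbit_fixing_1_2:
  "{3, 4, 5, 6, 7, 8, 9, 10, 11} \<subseteq> (\<lambda>g. g 3) ` (M11 \<inter> point_stabilizer 11 1 \<inter> point_stabilizer 11 2)"
proof -
  let ?W = "{id,
      m11_a \<circ> m11_b \<circ> m11_a \<circ> m11_a \<circ> m11_a \<circ> m11_a \<circ> m11_a \<circ> m11_b \<circ> m11_a \<circ> m11_b,
      m11_a \<circ> m11_b \<circ> m11_a \<circ> m11_a \<circ> m11_a \<circ> m11_a \<circ> m11_a \<circ> m11_b \<circ> m11_a \<circ> m11_b \<circ> m11_b,
      m11_a \<circ> m11_b \<circ> m11_a \<circ> m11_b \<circ> m11_a \<circ> m11_b \<circ> m11_a \<circ> m11_b \<circ> m11_b \<circ> m11_a \<circ> m11_a \<circ> m11_a,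
      m11_b,
      m11_b \<circ> m11_b \<circ> m11_b,
      m11_a \<circ> m11_a \<circ> m11_b \<circ> m11_a \<circ> m11_b \<circ> m11_b \<circ> m11_a \<circ> m11_b \<circ> m11_a \<circ> m11_a \<circ> m11_b \<circ> m11_a,
      m11_b \<circ> m11_a \<circ> m11_b \<circ> m11_a \<circ> m11_a \<circ> m11_a \<circ> m11_a \<circ> m11_a \<circ> m11_b \<circ> m11_a \<circ> m11_b,
      m11_b \<circ> m11_b}"
  have "{3, 4, 5, 6, 7, 8, 9, 10, 11} \<subseteq> (\<lambda>g. g 3) ` ?W" by simp
  also have "\<dots> \<subseteq> (\<lambda>g. g 3) ` (M11 \<inter> point_stabilizer 11 1 \<inter> point_stabilizer 11 2)"
    by (rule image_mono) (simp add: point_stabilizer_def M11_words M11.mem_carrier)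
  finally show ?thesis .
qed

lemma M11_orbit_fixing_1_2_3:
  "{4, 6, 7, 9, 10} \<subseteq> (\<lambda>g. g 4) ` (M11 \<inter> point_stabilizer 11 1 \<inter> point_stabilizer 11 2 \<inter> point_stabilizer 11 3)"
proof -
  let ?W = "{id,
      m11_a \<circ> m11_a \<circ> m11_a \<circ> m11_b \<circ> m11_b \<circ> m11_a \<circ> m11_b \<circ> m11_a \<circ> m11_b \<circ> m11_a \<circ> m11_a \<circ> m11_b \<circ> m11_a,
      m11_b \<circ> m11_a \<circ> m11_a \<circ> m11_b \<circ> m11_b \<circ> m11_a \<circ> m11_b \<circ> m11_a \<circ> m11_a \<circ> m11_a \<circ> m11_b \<circ> m11_a \<circ> m11_a,
      m11_b \<circ> m11_b \<circ> m11_a \<circ> m11_b \<circ> m11_a \<circ> m11_a \<circ> m11_a \<circ> m11_a \<circ> m11_a \<circ> m11_b \<circ> m11_a,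
      m11_b \<circ> m11_b \<circ> m11_a \<circ> m11_b \<circ> m11_a \<circ> m11_a \<circ> m11_a \<circ> m11_a \<circ> m11_b \<circ> m11_a \<circ> m11_b \<circ> m11_a \<circ> m11_a}"
  have "{4, 6, 7, 9, 10} \<subseteq> (\<lambda>g. g 4) ` ?W" by simp
  also have "\<dots> \<subseteq> (\<lambda>g. g 4) ` (M11 \<inter> point_stabilizer 11 1 \<inter> point_stabilizer 11 2 \<inter> point_stabilizer 11 3)"
    by (rule image_mono) (simp add: point_stabilizer_def M11_words M11.mem_carrier)
  finally show ?thesis .
qed

text \<open>Only five points of the last orbit (which has eight) are witnessed above: the
  bound \<open>4950\<^sup>2 > |A\<^sub>1\<^sub>1| = 19958400\<close> is all that is needed.\<close>

lemma card_M11: "4950 \<le> card M11"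
proof -
  let ?S1 = "M11 \<inter> point_stabilizer 11 1"
  let ?S2 = "?S1 \<inter> point_stabilizer 11 2"
  let ?S3 = "?S2 \<inter> point_stabilizer 11 3"
  let ?S4 = "?S3 \<inter> point_stabilizer 11 4"
  interpret S1: alt_subgroup 11 ?S1 by (rule M11.alt_subgroup_inter_point_stabilizer)
  interpret S2: alt_subgroup 11 ?S2 by (rule S1.alt_subgroup_inter_point_stabilizer)
  interpret S3: alt_subgroup 11 ?S3 by (rule S2.alt_subgroup_inter_point_stabilizer)
  interpret S4: alt_subgroup 11 ?S4 by (rule S3.alt_subgroup_inter_point_stabilizer)
  have "{1..11} \<subseteq> (\<lambda>g. g 1) ` M11"
  proof
    fix b :: nat assume "b \<in> {1..11}"
    then obtain g where "g \<in> M11" "g 1 = b" using M11_transitive by blast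
    then show "b \<in> (\<lambda>g. g 1) ` M11" by force
  qed
  then have "11 * card ?S1 \<le> card M11" using M11.card_orbit_mult_card_stabilizer_le[of "{1..11}"] by simp
  moreover have "10 * card ?S2 \<le> card ?S1"
    using S1.card_orbit_mult_card_stabilizer_le[OF M11_orbit_fixing_1] by simp
  moreover have "9 * card ?S3 \<le> card ?S2"
    using S2.card_orbit_mult_card_stabilizer_le[OF M11_orbit_fixing_1_2] by simp
  moreover have "5 * card ?S4 \<le> card ?S3"
    using S3.card_orbit_mult_card_stabilizer_le[OF M11_orbit_fixing_1_2_3] by simp
  moreover have "1 \<le> card ?S4" using S4.id_mem S4.finite_subgroup by (metis One_nat_def Suc_leI card_gt_0_iff empty_iff)
  ultimately show ?thesis by linarith
qed

section \<open>The upper bound for \<open>A\<^sub>1\<^sub>1\<close>\<close>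

definition A11_hub :: "(nat \<Rightarrow> nat) set \<Rightarrow> bool" where
  "A11_hub H \<longleftrightarrow> (\<forall>b\<in>{1..11}. H \<inter> point_stabilizer 11 b \<noteq> {id}) \<and>
     ((\<exists>a\<in>{1..11}. H = point_stabilizer 11 a) \<or> 4950 \<le> card H)"

lemma A11_hub_point_stabilizer: "a \<in> {1..11} \<Longrightarrow> A11_hub (point_stabilizer 11 a)"
  unfolding A11_hub_def using point_stabilizers_intersect[of 11 a] by auto

lemma A11_hub_conj_M11:
  assumes s: "s permutes {1..11}"
  shows "A11_hub (conj_image s M11)"
  unfolding A11_hub_def
proof
  have sub: "M11 \<subseteq> carrier (alt_group 11)" using M11.mem_carrier by blast
  show "\<forall>b\<in>{1..11}. conj_image s M11 \<inter> point_stabilizer 11 b \<noteq> {id}"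
  proof
    fix b :: nat assume "b \<in> {1..11}"
    then have "inv' s b \<in> {1..11}" using permutes_in_image[OF permutes_inv[OF s]] by blast
    then show "conj_image s M11 \<inter> point_stabilizer 11 b \<noteq> {id}"
      by (rule conj_image_inter_point_stabilizer[OF s sub M11_inter_point_stabilizer M11.id_mem])
  qed
  show "(\<exists>a\<in>{1..11}. conj_image s M11 = point_stabilizer 11 a) \<or> 4950 \<le> card (conj_image s M11)"
    using card_conj_image[OF s] card_M11 by simp
qed

lemma A11_fixed_point_free_vertex_meets_conj_M11:
  assumes X: "X \<in> intersection_graph_vertices (alt_group 11)"
    and fpf: "\<And>h a. h \<in> X \<Longrightarrow> h \<noteq> id \<Longrightarrow> a \<in> {1..11} \<Longrightarrow> h a \<noteq> a"
  obtains s where "s permutes {1..11}" "X \<inter> conj_image s M11 \<noteq> {id}"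
proof -
  interpret X: alt_subgroup 11 X
    using X unfolding intersection_graph_vertices_def by (intro alt_subgroup.intro) simp
  obtain x where x: "x \<in> X" "x \<noteq> id"
    using X X.id_mem unfolding intersection_graph_vertices_def by (auto simp: alt_group_one)
  have powers_fpf: "x ^^ k = id" if "a \<in> {1..11}" "(x ^^ k) a = a" for k a
    using fpf X.funpow_closed[OF x(1)] that by blast
  obtain s where s: "s permutes {1..11}" "x = s \<circ> m11_a \<circ> inv' s"
    by (rule fixed_point_free_is_conj_long_cycle[OF _ X.mem_permutes[OF x(1)] x(2) powers_fpf]) simp
  have "x \<in> conj_image s M11" using s(2) m11_a_in_M11 unfolding conj_image_def by blast
  then show ?thesis using that s(1) x by blast
qed

lemma A11_vertex_meets_hub:
  assumes X: "X \<in> intersection_graph_vertices (alt_group 11)"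
  obtains H where "H \<in> intersection_graph_vertices (alt_group 11)" "X \<inter> H \<noteq> {id}" "A11_hub H"
proof (cases "\<exists>h\<in>X. h \<noteq> id \<and> (\<exists>a\<in>{1..11}. h a = a)")
  case True
  then obtain h a where h: "h \<in> X" "h \<noteq> id" "a \<in> {1..11}" "h a = a" by blast
  have "subgroup X (alt_group 11)" using X unfolding intersection_graph_vertices_def by simp
  then have "h \<in> carrier (alt_group 11)" using h(1) by (rule subgroup.mem_carrier)
  then have "X \<inter> point_stabilizer 11 a \<noteq> {id}" using h unfolding point_stabilizer_def by blast
  moreover have "point_stabilizer 11 a \<in> intersection_graph_vertices (alt_group 11)"
    using h(3) by (intro point_stabilizer_in_vertices) auto
  ultimately show ?thesis using that A11_hub_point_stabilizer[OF h(3)] by blast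
next
  case False
  then have "h a \<noteq> a" if "h \<in> X" "h \<noteq> id" "a \<in> {1..11}" for h a
    using that by blast
  then obtain s where s: "s permutes {1..11}" "X \<inter> conj_image s M11 \<noteq> {id}"
    using A11_fixed_point_free_vertex_meets_conj_M11[OF X] by blast
  show ?thesis
    by (rule that[OF M11.conj_image_in_vertices[OF s(1) M11_in_vertices] s(2) A11_hub_conj_M11[OF s(1)]])
qed

lemma A11_hubs_intersect:
  assumes "H \<in> intersection_graph_vertices (alt_group 11)" "K \<in> intersection_graph_vertices (alt_group 11)"
    and "A11_hub H" "A11_hub K"
  shows "H \<inter> K \<noteq> {id}"
proof -
  have H: "\<forall>b\<in>{1..11}. H \<inter> point_stabilizer 11 b \<noteq> {id}"
    and K: "\<forall>b\<in>{1..11}. K \<inter> point_stabilizer 11 b \<noteq> {id}"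
    using assms(3,4) unfolding A11_hub_def by blast+
  from assms(3,4) consider (stab_H) a where "a \<in> {1..11}" "H = point_stabilizer 11 a"
    | (stab_K) b where "b \<in> {1..11}" "K = point_stabilizer 11 b"
    | (large) "4950 \<le> card H" "4950 \<le> card K"
    unfolding A11_hub_def by blast
  then show ?thesis
  proof cases
    case (stab_H a)
    then show ?thesis using K by (simp add: Int_commute)
  next
    case (stab_K b)
    then show ?thesis using H by simp
  next
    case large
    show ?thesis
    proof
      assume "H \<inter> K = {id}"
      then have "card H * card K \<le> order (alt_group 11)"
        using group.card_mult_le_order[OF alt_group_is_group finite_carrier_alt_group] assms(1,2)
        unfolding intersection_graph_vertices_def by (simp add: alt_group_one)
      also have "\<dots> = 19958400"
        unfolding order_def using alt_group_card_carrier[of 11] by (simp add: fact_numeral)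
      finally show False using mult_le_mono[OF large] by simp
    qed
  qed
qed

lemma A11_graph_dist_le_3:
  assumes "X \<in> intersection_graph_vertices (alt_group 11)" "Y \<in> intersection_graph_vertices (alt_group 11)"
  shows "graph_dist (intersection_graph_vertices (alt_group 11)) (intersection_graph_adj (alt_group 11)) X Y \<le> 3"
proof -
  note adj = intersection_graph_adj_or_eq[of _ _ "alt_group 11", unfolded alt_group_one]
  obtain H where H: "H \<in> intersection_graph_vertices (alt_group 11)" "X \<inter> H \<noteq> {id}" "A11_hub H"
    using A11_vertex_meets_hub[OF assms(1)] by blast
  obtain K where K: "K \<in> intersection_graph_vertices (alt_group 11)" "Y \<inter> K \<noteq> {id}" "A11_hub K"
    using A11_vertex_meets_hub[OF assms(2)] by blast
  show ?thesis
  proof (rule graph_dist_le_3I[OF assms(1) H(1) K(1) assms(2)])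
    show "X = H \<or> intersection_graph_adj (alt_group 11) X H" using adj H(2) by blast
    show "H = K \<or> intersection_graph_adj (alt_group 11) H K"
      using adj A11_hubs_intersect[OF H(1) K(1) H(3) K(3)] by blast
    show "K = Y \<or> intersection_graph_adj (alt_group 11) K Y"
      using adj[of K Y] K(2) by (simp add: Int_commute)
  qed
qed

theorem mainTheorem6:
  shows "graph_diameter (intersection_graph_vertices (alt_group 11))
           (intersection_graph_adj (alt_group 11)) = 3"
proof (rule graph_diameter_eqI)
  show "graph_dist (intersection_graph_vertices (alt_group 11)) (intersection_graph_adj (alt_group 11)) X Y \<le> 3"
    if "X \<in> intersection_graph_vertices (alt_group 11)" "Y \<in> intersection_graph_vertices (alt_group 11)"
    for X Y
    using A11_graph_dist_le_3 that .
  show "powers (long_cycle 11) \<in> intersection_graph_vertices (alt_group 11)"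
    and "powers (long_cycle 3) \<in> intersection_graph_vertices (alt_group 11)"
    by (rule powers_long_cycles_in_vertices; simp)+
  show "3 \<le> graph_dist (intersection_graph_vertices (alt_group 11)) (intersection_graph_adj (alt_group 11))
          (powers (long_cycle 11)) (powers (long_cycle 3))"
    by (rule alt_intersection_graph_dist_ge_3) simp_all
qed


end
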